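(* Let $K$ be a field, let $X$ be a set, let $F \subseteq K\langle X\rangle$ be such that no polynomial in $F$ has a constant term, and let $f \in (F)$. Let $Q=(V,E,X,s,t,l)$ be a labelled quiver whose edges have unique labels in $X$ (i.e. $l$ is injective), and assume that $f$ and all elements of $F$ are compatible with $Q$. Then, for every representation $\mathcal{R}=(\mathcal{V},\varphi)$ of $Q$ over $K$ such that the realizations of the elements of $F$ with respect to $\mathcal{R}$ are zero, the realization of $f$ with respect to $\mathcal{R}$ is zero.
   Context: $K\langle X\rangle$ denotes the free algebra of noncommutative polynomials in the indeterminates $X$ with coefficients in $K$; monomials are words in $\langle X\rangle$ (the free monoid on $X$, including the empty word $1$). Every $f$ has a unique representation $f=\sum_m c_m m$ with finitely many nonzero $c_m\in K$, and $\operatorname{supp}(f)=\{m : c_m\neq 0\}$. $(F)$ is the two-sided ideal generated by $F$. A labelled quiver $Q=(V,E,X,s,t,l)$ consists of a set of vertices $V$, a set of edges $E$, maps $s,t:E\to V$ (source, target) and a labelling $l:E\to X$. A nonempty path $p=e_n\cdots e_1$ (edges with $s(e_{i+1})=t(e_i)$) has label $l(p)=l(e_n)\cdots l(e_1)\in\langle X\rangle$, source $s(e_1)$ and target $t(e_n)$; for each vertex $v$ there is an empty path $\epsilon_v$ with label $1$ and source and target $v$. For a monomial $m$, $\sigma(m)=\{(s(p),t(p)) : p \text{ a path in } Q \text{ with } l(p)=m\}$, and for a polynomial $f$, $\sigma(f)=\bigcap_{m\in\operatorname{supp}(f)}\sigma(m)$ (so $\sigma(0)=V\times V$). $f$ is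 compatible with $Q$ if $\sigma(f)\neq\emptyset$. For $v,w\in V$ let $K\langle X\rangle_{v,w}=\{f : (v,w)\in\sigma(f)\}$. A representation $(\mathcal{V},\varphi)$ of $Q$ over $K$ assigns to each vertex $v$ a $K$-vector space $\mathcal{V}_v$ and to each edge $e$ a $K$-linear map $\varphi(e):\mathcal{V}_{s(e)}\to\mathcal{V}_{t(e)}$. For $v,w\in V$, the realization map $\varphi_{v,w}:K\langle X\rangle_{v,w}\to L(\mathcal{V}_v,\mathcal{V}_w)$ is the $K$-linear map with $\varphi_{v,w}(l(e_n\cdots e_1))=\varphi(e_n)\cdots\varphi(e_1)$ for each nonempty path $e_n\cdots e_1$ from $v$ to $w$ and $\varphi_{v,v}(1)=\mathrm{id}_{\mathcal{V}_v}$; for $f\in K\langle X\rangle_{v,w}$, $\varphi_{v,w}(f)$ is called a realization of $f$ with respect to the representation. (Under the hypotheses of unique labels and no constant terms, these maps are well defined and a compatible nonzero polynomial has a unique realization.) *)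

theory Defs
  imports Complex_Main "HOL-Library.Poly_Mapping"
begin

text \<open>Noncommutative polynomials K<X>: finitely supported maps from words
  (lists over the alphabet type 'x; [] is the empty word 1) to coefficients.
  A word x1 x2 ... xn is the list [x1, x2, ..., xn].\<close>

type_synonym ('x, 'k) ncpoly = "'x list \<Rightarrow>\<^sub>0 'k"

definition ncmult :: "('x, 'k::semiring_0) ncpoly \<Rightarrow> ('x, 'k) ncpoly \<Rightarrow> ('x, 'k) ncpoly" where
  "ncmult p q = (\<Sum>a\<in>Poly_Mapping.keys p. \<Sum>b\<in>Poly_Mapping.keys q. Poly_Mapping.single (a @ b) (Poly_Mapping.lookup p a * Poly_Mapping.lookup q b))"

inductive_set ideal_gen :: "('x, 'k::comm_ring_1) ncpoly set \<Rightarrow> ('x, 'k) ncpoly set"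
  for F where
  zero: "0 \<in> ideal_gen F"
| gen: "g \<in> F \<Longrightarrow> g \<in> ideal_gen F"
| add: "a \<in> ideal_gen F \<Longrightarrow> b \<in> ideal_gen F \<Longrightarrow> a + b \<in> ideal_gen F"
| mult_left: "a \<in> ideal_gen F \<Longrightarrow> ncmult p a \<in> ideal_gen F"
| mult_right: "a \<in> ideal_gen F \<Longrightarrow> ncmult a p \<in> ideal_gen F"

definition quiver :: "'v set \<Rightarrow> 'e set \<Rightarrow> ('e \<Rightarrow> 'v) \<Rightarrow> ('e \<Rightarrow> 'v) \<Rightarrow> ('e \<Rightarrow> 'x) \<Rightarrow> bool" where
  "quiver V E s t l \<longleftrightarrow> (\<forall>e\<in>E. s e \<in> V \<and> t e \<in> V)"

text \<open>A path e_n ... e_1 is the list [e_n, ..., e_1]; is_path V E s t v w p means p is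
  a path with source v and target w (for p = [] this is the empty path at v, so v = w).\<close>
definition is_path :: "'v set \<Rightarrow> 'e set \<Rightarrow> ('e \<Rightarrow> 'v) \<Rightarrow> ('e \<Rightarrow> 'v) \<Rightarrow> 'v \<Rightarrow> 'v \<Rightarrow> 'e list \<Rightarrow> bool" where
  "is_path V E s t v w p \<longleftrightarrow>
     (if p = [] then v = w \<and> v \<in> V
      else set p \<subseteq> E \<and> s (last p) = v \<and> t (hd p) = w \<and>
           (\<forall>i. Suc i < length p \<longrightarrow> s (p ! i) = t (p ! Suc i)))"

definition path_label :: "('e \<Rightarrow> 'x) \<Rightarrow> 'e list \<Rightarrow> 'x list" where
  "path_label l p = map l p"

definition sigma_mono :: "'v set \<Rightarrow> 'e set \<Rightarrow> ('e \<Rightarrow> 'v) \<Rightarrow> ('e \<Rightarrow> 'v) \<Rightarrow> ('e \<Rightarrow> 'x) \<Rightarrow> 'x list \<Rightarrow> ('v \<times> 'v) set" where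
  "sigma_mono V E s t l m = {(v, w). \<exists>p. is_path V E s t v w p \<and> path_label l p = m}"

text \<open>sigma(f) = intersection of sigma(m) over supp f (with sigma(0) = V x V).\<close>
definition sigma :: "'v set \<Rightarrow> 'e set \<Rightarrow> ('e \<Rightarrow> 'v) \<Rightarrow> ('e \<Rightarrow> 'v) \<Rightarrow> ('e \<Rightarrow> 'x) \<Rightarrow> ('x, 'k::zero) ncpoly \<Rightarrow> ('v \<times> 'v) set" where
  "sigma V E s t l f = (V \<times> V) \<inter> (\<Inter>m\<in>Poly_Mapping.keys f. sigma_mono V E s t l m)"

definition compatible :: "'v set \<Rightarrow> 'e set \<Rightarrow> ('e \<Rightarrow> 'v) \<Rightarrow> ('e \<Rightarrow> 'v) \<Rightarrow> ('e \<Rightarrow> 'x) \<Rightarrow> ('x, 'k::zero) ncpoly \<Rightarrow> bool" where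
  "compatible V E s t l f \<longleftrightarrow> sigma V E s t l f \<noteq> {}"

text \<open>A representation of the quiver over the field 'k: the vector spaces are given as
  subspaces Sp v (v in V) of an ambient 'k-vector space 'w (with scalar multiplication
  scale), and each edge e gets a map phi e that is K-linear from Sp (s e) to Sp (t e).\<close>
definition representation ::
  "('k::field \<Rightarrow> 'w::ab_group_add \<Rightarrow> 'w) \<Rightarrow> 'v set \<Rightarrow> 'e set \<Rightarrow> ('e \<Rightarrow> 'v) \<Rightarrow> ('e \<Rightarrow> 'v)
     \<Rightarrow> ('v \<Rightarrow> 'w set) \<Rightarrow> ('e \<Rightarrow> 'w \<Rightarrow> 'w) \<Rightarrow> bool" where
  "representation scale V E s t Sp \<phi> \<longleftrightarrow>
     vector_space scale \<and>
     (\<forall>v\<in>V. 0 \<in> Sp v \<and> (\<forall>x\<in>Sp v. \<forall>y\<in>Sp v. x + y \<in> Sp v) \<and> (\<forall>c. \<forall>x\<in>Sp v. scale c x \<in> Sp v)) \<and>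
     (\<forall>e\<in>E. (\<forall>x\<in>Sp (s e). \<phi> e x \<in> Sp (t e)) \<and>
            (\<forall>x\<in>Sp (s e). \<forall>y\<in>Sp (s e). \<phi> e (x + y) = \<phi> e x + \<phi> e y) \<and>
            (\<forall>c. \<forall>x\<in>Sp (s e). \<phi> e (scale c x) = scale c (\<phi> e x)))"

definition path_map :: "('e \<Rightarrow> 'w \<Rightarrow> 'w) \<Rightarrow> 'e list \<Rightarrow> 'w \<Rightarrow> 'w" where
  "path_map \<phi> p x = foldr \<phi> p x"

text \<open>Realization phi_{v,w}(f), for f in K<X>_{v,w}, applied to a vector x: linear extension of
  the assignment l(p) |-> map of p, for p the (under unique labels, unique) path from v to w
  with label m.\<close>
definition realization ::
  "('k::field \<Rightarrow> 'w::ab_group_add \<Rightarrow> 'w) \<Rightarrow> 'v set \<Rightarrow> 'e set \<Rightarrow> ('e \<Rightarrow> 'v) \<Rightarrow> ('e \<Rightarrow> 'v)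
     \<Rightarrow> ('e \<Rightarrow> 'x) \<Rightarrow> ('e \<Rightarrow> 'w \<Rightarrow> 'w) \<Rightarrow> 'v \<Rightarrow> 'v \<Rightarrow> ('x, 'k) ncpoly \<Rightarrow> 'w \<Rightarrow> 'w" where
  "realization scale V E s t l \<phi> v w f x =
     (\<Sum>m\<in>Poly_Mapping.keys f. scale (Poly_Mapping.lookup f m)
        (path_map \<phi> (THE p. is_path V E s t v w p \<and> path_label l p = m) x))"

end

theory Submission
  imports Defs
begin

(* Extend the realization of a monomial m at (v, w) by zero to the pairs with no path
  from v to w labelled m, and linearly to all polynomials.  Since labels are unique, a
  path is determined by its label; so in a product alpha beta the vertex where the
  alpha-part and the beta-part meet is determined by one factor alone, and the extended
  realization of p a and of a p factors through that of a.  Hence the polynomials whose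
  extended realization vanishes at every pair of vertices form a two-sided ideal.  It
  contains each generator g: at a pair in sigma g the extension is the given realization,
  and at any other pair no monomial of g has a path, because the path of a nonempty word
  has fixed endpoints. *)

lemma is_path_Nil [simp]: "is_path V E s t v w [] \<longleftrightarrow> v = w \<and> v \<in> V"
  by (simp add: is_path_def)

lemma is_path_Cons:
  assumes "quiver V E s t l"
  shows "is_path V E s t v w (e # p) \<longleftrightarrow> e \<in> E \<and> t e = w \<and> is_path V E s t v (s e) p"
proof (cases p)
  case (Cons e' p')
  have "(\<forall>i. Suc i < length (e # p) \<longrightarrow> s ((e # p) ! i) = t ((e # p) ! Suc i)) \<longleftrightarrow>
        s e = t e' \<and> (\<forall>i. Suc i < length p \<longrightarrow> s (p ! i) = t (p ! Suc i))"
    unfolding Cons by (auto simp: less_Suc_eq_0_disj)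
  then show ?thesis using Cons by (auto simp: is_path_def)
qed (use assms in \<open>auto simp: is_path_def quiver_def\<close>)

lemma is_path_endpoints_in:
  assumes "quiver V E s t l" "is_path V E s t v w p"
  shows "v \<in> V" "w \<in> V"
  using assms
  by (auto simp: is_path_def quiver_def split: if_splits) (meson hd_in_set last_in_set subsetD)+

lemma is_path_append:
  assumes "quiver V E s t l"
  shows "is_path V E s t v w (p @ q) \<longleftrightarrow> (\<exists>u. is_path V E s t u w p \<and> is_path V E s t v u q)"
proof (induction p arbitrary: w)
  case Nil
  then show ?case by (auto dest: is_path_endpoints_in(2)[OF assms])
next
  case (Cons e p)
  then show ?case by (auto simp: is_path_Cons[OF assms])
qed

lemma path_label_eq_imp_eq:
  assumes "inj_on l E" "is_path V E s t v w p" "is_path V E s t v' w' q"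
    and "path_label l p = path_label l q"
  shows "p = q"
proof -
  have "set p \<union> set q \<subseteq> E" using assms(2,3) by (auto simp: is_path_def split: if_splits)
  then show ?thesis
    using assms(1,4) by (auto simp: path_label_def intro: map_inj_on inj_on_subset)
qed

lemma sigma_mono_subset:
  "quiver V E s t l \<Longrightarrow> sigma_mono V E s t l m \<subseteq> V \<times> V"
  by (auto simp: sigma_mono_def dest: is_path_endpoints_in)

lemma sigma_mono_Nil: "(v, w) \<in> sigma_mono V E s t l [] \<longleftrightarrow> v = w \<and> v \<in> V"
  by (auto simp: sigma_mono_def path_label_def is_path_def)

lemma sigma_mono_append:
  assumes "quiver V E s t l"
  shows "(v, w) \<in> sigma_mono V E s t l (\<alpha> @ \<beta>) \<longleftrightarrow>
    (\<exists>u. (u, w) \<in> sigma_mono V E s t l \<alpha> \<and> (v, u) \<in> sigma_mono V E s t l \<beta>)"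
proof
  assume "(v, w) \<in> sigma_mono V E s t l (\<alpha> @ \<beta>)"
  then obtain p q where "is_path V E s t v w (p @ q)" "path_label l p = \<alpha>" "path_label l q = \<beta>"
    by (auto simp: sigma_mono_def path_label_def map_eq_append_conv)
  then show "\<exists>u. (u, w) \<in> sigma_mono V E s t l \<alpha> \<and> (v, u) \<in> sigma_mono V E s t l \<beta>"
    by (auto simp: sigma_mono_def is_path_append[OF assms])
next
  assume "\<exists>u. (u, w) \<in> sigma_mono V E s t l \<alpha> \<and> (v, u) \<in> sigma_mono V E s t l \<beta>"
  then obtain u p q where "is_path V E s t u w p" "path_label l p = \<alpha>"
    and "is_path V E s t v u q" "path_label l q = \<beta>"
    by (auto simp: sigma_mono_def)
  then show "(v, w) \<in> sigma_mono V E s t l (\<alpha> @ \<beta>)"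
    unfolding sigma_mono_def
    by (auto simp: is_path_append[OF assms] path_label_def intro!: exI[of _ "p @ q"])
qed

lemma sigma_mono_unique:
  assumes "inj_on l E" "m \<noteq> []"
    and "(v, w) \<in> sigma_mono V E s t l m" "(v', w') \<in> sigma_mono V E s t l m"
  shows "v = v' \<and> w = w'"
proof -
  obtain p q where p: "is_path V E s t v w p" "path_label l p = m"
    and q: "is_path V E s t v' w' q" "path_label l q = m"
    using assms(3,4) by (auto simp: sigma_mono_def)
  have "p = q" using path_label_eq_imp_eq[OF assms(1) p(1) q(1)] p(2) q(2) by simp
  moreover have "p \<noteq> []" using p(2) assms(2) by (auto simp: path_label_def)
  ultimately show ?thesis using p(1) q(1) by (simp add: is_path_def)
qed

lemma sigma_mono_unique_source:
  assumes "quiver V E s t l" "inj_on l E" "w \<in> V"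
  shows "\<exists>u\<in>V. \<forall>u'. (u', w) \<in> sigma_mono V E s t l m \<longrightarrow> u' = u"
proof (cases "m = [] \<or> (\<forall>u'. (u', w) \<notin> sigma_mono V E s t l m)")
  case True
  then show ?thesis using assms(3) by (auto simp: sigma_mono_Nil)
next
  case False
  then obtain u where u: "m \<noteq> []" "(u, w) \<in> sigma_mono V E s t l m" by blast
  then have "u \<in> V" using sigma_mono_subset[OF assms(1)] by auto
  moreover have "u' = u" if "(u', w) \<in> sigma_mono V E s t l m" for u'
    using sigma_mono_unique[OF assms(2) u(1) that u(2)] by simp
  ultimately show ?thesis by blast
qed

lemma sigma_mono_unique_target:
  assumes "quiver V E s t l" "inj_on l E" "v \<in> V"
  shows "\<exists>u\<in>V. \<forall>u'. (v, u') \<in> sigma_mono V E s t l m \<longrightarrow> u' = u"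
proof (cases "m = [] \<or> (\<forall>u'. (v, u') \<notin> sigma_mono V E s t l m)")
  case True
  then show ?thesis using assms(3) by (auto simp: sigma_mono_Nil)
next
  case False
  then obtain u where u: "m \<noteq> []" "(v, u) \<in> sigma_mono V E s t l m" by blast
  then have "u \<in> V" using sigma_mono_subset[OF assms(1)] by auto
  moreover have "u' = u" if "(v, u') \<in> sigma_mono V E s t l m" for u'
    using sigma_mono_unique[OF assms(2) u(1) that u(2)] by simp
  ultimately show ?thesis by blast
qed

lemma path_map_Nil [simp]: "path_map \<phi> [] = (\<lambda>x. x)"
  and path_map_Cons [simp]: "path_map \<phi> (e # p) = (\<lambda>x. \<phi> e (path_map \<phi> p x))"
  and path_map_append: "path_map \<phi> (p @ q) = (\<lambda>x. path_map \<phi> p (path_map \<phi> q x))"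
  by (simp_all add: path_map_def fun_eq_iff)

definition linear_on :: "('a \<Rightarrow> 'b \<Rightarrow> 'b) \<Rightarrow> 'b set \<Rightarrow> 'b set \<Rightarrow> ('b::plus \<Rightarrow> 'b) \<Rightarrow> bool" where
  "linear_on scale S T f \<longleftrightarrow> f ` S \<subseteq> T \<and> (\<forall>x\<in>S. \<forall>y\<in>S. f (x + y) = f x + f y) \<and>
     (\<forall>c. \<forall>x\<in>S. f (scale c x) = scale c (f x))"

context module
begin

lemma linear_on_id: "linear_on scale S S (\<lambda>x. x)"
  by (simp add: linear_on_def)

lemma linear_on_comp:
  "linear_on scale S T f \<Longrightarrow> linear_on scale T U g \<Longrightarrow> linear_on scale S U (\<lambda>x. g (f x))"
  by (auto simp: linear_on_def image_subset_iff)

lemma linear_on_zero: "subspace T \<Longrightarrow> linear_on scale S T (\<lambda>x. 0)"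
  by (simp add: linear_on_def subspace_0 image_subset_iff)

lemma linear_on_0:
  assumes "subspace S" "linear_on scale S T f"
  shows "f 0 = 0"
proof -
  have "\<forall>x\<in>S. \<forall>y\<in>S. f (x + y) = f x + f y" using assms(2) by (simp add: linear_on_def)
  then have "f (0 + 0) = f 0 + f 0" using subspace_0[OF assms(1)] by blast
  then show ?thesis by simp
qed

lemma linear_on_sum:
  assumes "subspace S" "linear_on scale S T f" "\<And>i. i \<in> I \<Longrightarrow> x i \<in> S"
  shows "f (\<Sum>i\<in>I. c i *s x i) = (\<Sum>i\<in>I. c i *s f (x i))"
  using assms(3)
proof (induction I rule: infinite_finite_induct)
  case (insert i I)
  have "(\<Sum>j\<in>I. c j *s x j) \<in> S"
    using insert.prems by (intro subspace_sum[OF assms(1)] subspace_scale[OF assms(1)]) auto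
  moreover have "c i *s x i \<in> S" using insert.prems subspace_scale[OF assms(1)] by simp
  ultimately show ?case using insert assms(2) by (simp add: linear_on_def)
qed (use linear_on_0[OF assms(1,2)] in simp_all)

end

locale unique_label_representation = vector_space scale
  for scale :: "'k::field \<Rightarrow> 'w::ab_group_add \<Rightarrow> 'w" (infixr \<open>*s\<close> 75) +
  fixes V :: "'v set" and E :: "'e set" and s t :: "'e \<Rightarrow> 'v" and l :: "'e \<Rightarrow> 'x"
    and Sp :: "'v \<Rightarrow> 'w set" and \<phi> :: "'e \<Rightarrow> 'w \<Rightarrow> 'w"
  assumes quiver: "quiver V E s t l"
    and unique_labels: "inj_on l E"
    and subspace_Sp: "v \<in> V \<Longrightarrow> subspace (Sp v)"
    and linear_on_edge: "e \<in> E \<Longrightarrow> linear_on scale (Sp (s e)) (Sp (t e)) (\<phi> e)"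

lemma unique_label_representationI:
  assumes "quiver V E s t l" "inj_on l E" "representation scale V E s t Sp \<phi>"
  shows "unique_label_representation scale V E s t l Sp \<phi>"
proof -
  \<comment> \<open>Qualified names: the module locale has its own constant representation.\<close>
  interpret vector_space scale using assms(3) by (simp add: Defs.representation_def)
  show ?thesis
    using assms by unfold_locales (auto simp: Defs.representation_def subspace_def linear_on_def)
qed

context unique_label_representation
begin

lemma path_map_linear_on:
  "is_path V E s t v w p \<Longrightarrow> linear_on scale (Sp v) (Sp w) (path_map \<phi> p)"
proof (induction p arbitrary: w)
  case Nil
  then show ?case by (simp add: linear_on_id)
next
  case (Cons e p)
  then have "e \<in> E" "t e = w" "is_path V E s t v (s e) p"
    by (simp_all add: is_path_Cons[OF quiver])
  then show ?case using Cons.IH linear_on_edge linear_on_comp by fastforce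
qed

definition word_map :: "'v \<Rightarrow> 'v \<Rightarrow> 'x list \<Rightarrow> 'w \<Rightarrow> 'w" where
  "word_map v w m = (if (v, w) \<in> sigma_mono V E s t l m
     then path_map \<phi> (THE p. is_path V E s t v w p \<and> path_label l p = m) else (\<lambda>x. 0))"

lemma word_map_path_label:
  assumes "is_path V E s t v w p"
  shows "word_map v w (path_label l p) = path_map \<phi> p"
proof -
  have "(THE q. is_path V E s t v w q \<and> path_label l q = path_label l p) = p"
    using assms path_label_eq_imp_eq[OF unique_labels _ assms] by blast
  then show ?thesis using assms by (auto simp: word_map_def sigma_mono_def)
qed

lemma word_map_linear_on:
  assumes "v \<in> V" "w \<in> V"
  shows "linear_on scale (Sp v) (Sp w) (word_map v w m)"
proof (cases "(v, w) \<in> sigma_mono V E s t l m")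
  case True
  then obtain p where "is_path V E s t v w p" "path_label l p = m" by (auto simp: sigma_mono_def)
  then show ?thesis using word_map_path_label path_map_linear_on by metis
qed (simp add: word_map_def linear_on_zero subspace_Sp assms)

lemma word_map_in: "v \<in> V \<Longrightarrow> w \<in> V \<Longrightarrow> y \<in> Sp v \<Longrightarrow> word_map v w m y \<in> Sp w"
  using word_map_linear_on[of v w m] by (auto simp: linear_on_def)

lemma word_map_zero [simp]: "word_map v w m 0 = 0"
proof (cases "(v, w) \<in> sigma_mono V E s t l m")
  case True
  then have "v \<in> V" "w \<in> V" using sigma_mono_subset[OF quiver] by auto
  then show ?thesis using linear_on_0 subspace_Sp word_map_linear_on by blast
qed (simp add: word_map_def)

lemma word_map_append:
  assumes "u \<in> V" "y \<in> Sp v"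
    and junction: "\<And>u'. (u', w) \<in> sigma_mono V E s t l \<alpha> \<Longrightarrow>
      (v, u') \<in> sigma_mono V E s t l \<beta> \<Longrightarrow> u' = u"
  shows "word_map v w (\<alpha> @ \<beta>) y = word_map u w \<alpha> (word_map v u \<beta> y)"
proof (cases "(v, w) \<in> sigma_mono V E s t l (\<alpha> @ \<beta>)")
  case True
  then obtain u' where "(u', w) \<in> sigma_mono V E s t l \<alpha>" "(v, u') \<in> sigma_mono V E s t l \<beta>"
    using sigma_mono_append[OF quiver] by blast
  moreover from this have "u' = u" by (rule junction)
  ultimately obtain p q where p: "is_path V E s t u w p" "path_label l p = \<alpha>"
    and q: "is_path V E s t v u q" "path_label l q = \<beta>"
    by (auto simp: sigma_mono_def)
  then have "is_path V E s t v w (p @ q)" "path_label l (p @ q) = \<alpha> @ \<beta>"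
    by (auto simp: is_path_append[OF quiver] path_label_def)
  then show ?thesis
    using p q by (metis word_map_path_label path_map_append)
next
  case False
  show ?thesis
  proof (cases "(v, u) \<in> sigma_mono V E s t l \<beta>")
    case True
    then have "(u, w) \<notin> sigma_mono V E s t l \<alpha>"
      using False sigma_mono_append[OF quiver] by blast
    then show ?thesis using False by (simp add: word_map_def)
  next
    case False
    then show ?thesis using \<open>(v, w) \<notin> sigma_mono V E s t l (\<alpha> @ \<beta>)\<close>
      by (simp add: word_map_def[of v])
  qed
qed

definition ext_realization :: "'v \<Rightarrow> 'v \<Rightarrow> ('x, 'k) ncpoly \<Rightarrow> 'w \<Rightarrow> 'w" where
  "ext_realization v w h y =
     (\<Sum>m\<in>Poly_Mapping.keys h. Poly_Mapping.lookup h m *s word_map v w m y)"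

lemma realization_eq_ext_realization:
  "(v, w) \<in> sigma V E s t l h \<Longrightarrow> realization scale V E s t l \<phi> v w h y = ext_realization v w h y"
  unfolding realization_def ext_realization_def word_map_def by (rule sum.cong) (auto simp: sigma_def)

lemma ext_realization_superset:
  assumes "finite M" "Poly_Mapping.keys h \<subseteq> M"
  shows "ext_realization v w h y = (\<Sum>m\<in>M. Poly_Mapping.lookup h m *s word_map v w m y)"
  unfolding ext_realization_def
  by (rule sum.mono_neutral_left) (use assms in \<open>auto simp: in_keys_iff\<close>)

lemma ext_realization_add:
  "ext_realization v w (a + b) y = ext_realization v w a y + ext_realization v w b y"
proof -
  let ?M = "Poly_Mapping.keys a \<union> Poly_Mapping.keys b"
  have "ext_realization v w (a + b) y
      = (\<Sum>m\<in>?M. Poly_Mapping.lookup (a + b) m *s word_map v w m y)"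
    using keys_add[of a b] by (intro ext_realization_superset) auto
  also have "\<dots> = ext_realization v w a y + ext_realization v w b y"
    by (simp add: lookup_add scale_left_distrib sum.distrib ext_realization_superset[where M = ?M])
  finally show ?thesis .
qed

lemma ext_realization_zero [simp]: "ext_realization v w 0 y = 0"
  by (simp add: ext_realization_def)

lemma ext_realization_sum:
  "ext_realization v w (\<Sum>i\<in>I. h i) y = (\<Sum>i\<in>I. ext_realization v w (h i) y)"
  by (induction I rule: infinite_finite_induct) (simp_all add: ext_realization_add)

lemma ext_realization_single:
  "ext_realization v w (Poly_Mapping.single m c) y = c *s word_map v w m y"
  by (simp add: ext_realization_def)

lemma ext_realization_ncmult:
  "ext_realization v w (ncmult p q) y = (\<Sum>\<alpha>\<in>Poly_Mapping.keys p. \<Sum>\<beta>\<in>Poly_Mapping.keys q.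
     (Poly_Mapping.lookup p \<alpha> * Poly_Mapping.lookup q \<beta>) *s word_map v w (\<alpha> @ \<beta>) y)"
  by (simp add: ncmult_def ext_realization_sum ext_realization_single)

definition vanishing :: "('x, 'k) ncpoly \<Rightarrow> bool" where
  "vanishing h \<longleftrightarrow> (\<forall>v\<in>V. \<forall>w\<in>V. \<forall>y\<in>Sp v. ext_realization v w h y = 0)"

lemma vanishing_ncmult_left:
  assumes "vanishing a"
  shows "vanishing (ncmult p a)"
  unfolding vanishing_def
proof (intro ballI)
  fix v w y assume "v \<in> V" "w \<in> V" "y \<in> Sp v"
  have "(\<Sum>\<beta>\<in>Poly_Mapping.keys a. Poly_Mapping.lookup a \<beta> *s word_map v w (\<alpha> @ \<beta>) y) = 0" for \<alpha>
  proof -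
    obtain u where "u \<in> V" and source: "\<And>u'. (u', w) \<in> sigma_mono V E s t l \<alpha> \<Longrightarrow> u' = u"
      using sigma_mono_unique_source[OF quiver unique_labels \<open>w \<in> V\<close>] by blast
    have "(\<Sum>\<beta>\<in>Poly_Mapping.keys a. Poly_Mapping.lookup a \<beta> *s word_map v w (\<alpha> @ \<beta>) y)
        = (\<Sum>\<beta>\<in>Poly_Mapping.keys a. Poly_Mapping.lookup a \<beta> *s word_map u w \<alpha> (word_map v u \<beta> y))"
      using word_map_append[OF \<open>u \<in> V\<close> \<open>y \<in> Sp v\<close>] source by simp
    also have "\<dots> = word_map u w \<alpha> (ext_realization v u a y)"
      unfolding ext_realization_def
      using subspace_Sp word_map_linear_on word_map_in \<open>u \<in> V\<close> \<open>v \<in> V\<close> \<open>w \<in> V\<close> \<open>y \<in> Sp v\<close>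
      by (intro linear_on_sum[symmetric])
    also have "\<dots> = 0"
      using assms \<open>u \<in> V\<close> \<open>v \<in> V\<close> \<open>y \<in> Sp v\<close> by (simp add: vanishing_def)
    finally show ?thesis .
  qed
  then show "ext_realization v w (ncmult p a) y = 0"
    by (simp add: ext_realization_ncmult scale_scale[symmetric] scale_sum_right[symmetric]
        del: scale_scale)
qed

lemma vanishing_ncmult_right:
  assumes "vanishing a"
  shows "vanishing (ncmult a p)"
  unfolding vanishing_def
proof (intro ballI)
  fix v w y assume "v \<in> V" "w \<in> V" "y \<in> Sp v"
  have "(\<Sum>\<beta>\<in>Poly_Mapping.keys a. Poly_Mapping.lookup a \<beta> *s word_map v w (\<beta> @ \<alpha>) y) = 0" for \<alpha>
  proof -
    obtain u where "u \<in> V" and target: "\<And>u'. (v, u') \<in> sigma_mono V E s t l \<alpha> \<Longrightarrow> u' = u"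
      using sigma_mono_unique_target[OF quiver unique_labels \<open>v \<in> V\<close>] by blast
    have "(\<Sum>\<beta>\<in>Poly_Mapping.keys a. Poly_Mapping.lookup a \<beta> *s word_map v w (\<beta> @ \<alpha>) y)
        = ext_realization u w a (word_map v u \<alpha> y)"
      using word_map_append[OF \<open>u \<in> V\<close> \<open>y \<in> Sp v\<close>] target by (simp add: ext_realization_def)
    also have "\<dots> = 0"
      using assms word_map_in \<open>u \<in> V\<close> \<open>v \<in> V\<close> \<open>w \<in> V\<close> \<open>y \<in> Sp v\<close> by (simp add: vanishing_def)
    finally show ?thesis .
  qed
  moreover have "ext_realization v w (ncmult a p) y = (\<Sum>\<alpha>\<in>Poly_Mapping.keys p.
      Poly_Mapping.lookup p \<alpha> *s
        (\<Sum>\<beta>\<in>Poly_Mapping.keys a. Poly_Mapping.lookup a \<beta> *s word_map v w (\<beta> @ \<alpha>) y))"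
    unfolding ext_realization_ncmult by (subst sum.swap) (simp add: scale_sum_right mult.commute)
  ultimately show "ext_realization v w (ncmult a p) y = 0" by simp
qed

lemma vanishing_generator:
  assumes no_const: "Poly_Mapping.lookup g [] = 0" and "compatible V E s t l g"
    and zero: "\<forall>(v, w)\<in>sigma V E s t l g. \<forall>x\<in>Sp v. realization scale V E s t l \<phi> v w g x = 0"
  shows "vanishing g"
  unfolding vanishing_def
proof (intro ballI)
  fix v w y assume "v \<in> V" "w \<in> V" "y \<in> Sp v"
  obtain v0 w0 where vw0: "(v0, w0) \<in> sigma V E s t l g"
    using \<open>compatible V E s t l g\<close> by (auto simp: compatible_def)
  show "ext_realization v w g y = 0"
  proof (cases "(v, w) = (v0, w0)")
    case True
    then have "(v, w) \<in> sigma V E s t l g" using vw0 by simp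
    moreover from this have "realization scale V E s t l \<phi> v w g y = 0"
      using zero \<open>y \<in> Sp v\<close> by blast
    ultimately show ?thesis by (simp add: realization_eq_ext_realization)
  next
    case False
    have "word_map v w m y = 0" if "m \<in> Poly_Mapping.keys g" for m
    proof -
      have "m \<noteq> []" using that no_const by (auto simp: in_keys_iff)
      moreover have "(v0, w0) \<in> sigma_mono V E s t l m" using vw0 that by (auto simp: sigma_def)
      ultimately have "(v, w) \<notin> sigma_mono V E s t l m"
        using False sigma_mono_unique[OF unique_labels] by fastforce
      then show ?thesis by (simp add: word_map_def)
    qed
    then show ?thesis by (simp add: ext_realization_def)
  qed
qed

lemma vanishing_ideal_gen:
  assumes "\<And>g. g \<in> F \<Longrightarrow> vanishing g" "f \<in> ideal_gen F"
  shows "vanishing f"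
  using assms(2)
proof (induction rule: ideal_gen.induct)
  case zero
  show ?case by (simp add: vanishing_def)
next
  case (add a b)
  then show ?case by (simp add: vanishing_def ext_realization_add)
qed (simp_all add: assms(1) vanishing_ncmult_left vanishing_ncmult_right)

end

theorem theorem1p1:
  fixes F :: "('x, 'k::field) ncpoly set"
    and f :: "('x, 'k) ncpoly"
    and V :: "'v set" and E :: "'e set"
    and s t :: "'e \<Rightarrow> 'v" and l :: "'e \<Rightarrow> 'x"
    and scale :: "'k \<Rightarrow> 'w::ab_group_add \<Rightarrow> 'w"
    and Sp :: "'v \<Rightarrow> 'w set" and \<phi> :: "'e \<Rightarrow> 'w \<Rightarrow> 'w"
  assumes no_const: "\<forall>g\<in>F. Poly_Mapping.lookup g [] = 0"
    and f_in: "f \<in> ideal_gen F"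
    and Q: "quiver V E s t l"
    and unique_labels: "inj_on l E"
    and f_compat: "compatible V E s t l f"
    and F_compat: "\<forall>g\<in>F. compatible V E s t l g"
    and rep: "representation scale V E s t Sp \<phi>"
    and F_zero: "\<forall>g\<in>F. \<forall>(v, w)\<in>sigma V E s t l g. \<forall>x\<in>Sp v.
                   realization scale V E s t l \<phi> v w g x = 0"
  shows "\<forall>(v, w)\<in>sigma V E s t l f. \<forall>x\<in>Sp v. realization scale V E s t l \<phi> v w f x = 0"
proof -
  interpret unique_label_representation scale V E s t l Sp \<phi>
    using Q unique_labels rep by (rule unique_label_representationI)
  have "vanishing g" if "g \<in> F" for g
    using that no_const F_compat F_zero by (intro vanishing_generator) auto
  then have "vanishing f" using f_in by (rule vanishing_ideal_gen)
  show ?thesis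
  proof clarify
    fix v w x assume vw: "(v, w) \<in> sigma V E s t l f" and "x \<in> Sp v"
    moreover from vw have "v \<in> V" "w \<in> V" by (auto simp: sigma_def)
    ultimately show "realization scale V E s t l \<phi> v w f x = 0"
      using \<open>vanishing f\<close> by (simp add: realization_eq_ext_realization vanishing_def)
  qed
qed

end
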